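(* Let $(V,\langle\cdot,\cdot\rangle)$ be a pseudo-Euclidean real vector space of signature $(k,l)$ with $k\ge2$, $l\ge2$, and let $Z\subseteq V$ be a subspace. The following are equivalent: (i) $q^+(Z)=k$; (ii) every positive $(k-1)$-plane $H\subseteq V$ is $Z$-extendable; (iii) every positive $(k-1)$-plane $H\subseteq V$ is $Z$-orthogonally-extendable.
   Context: A pseudo-Euclidean space of signature $(k,l)$ is a finite-dimensional real vector space with a symmetric non-degenerate bilinear form whose Sylvester diagonal form has $k$ entries $+1$ and $l$ entries $-1$. For a subspace $L$, $q^+(L)$ denotes the number of $+1$'s in a diagonalization of the restriction of the form to $L$, and $L^\perp$ is the orthogonal complement. A positive $r$-plane is an $r$-dimensional subspace on which the form is positive definite. For a subspace $Z$ and a positive $(k-1)$-plane $H$: $H$ is $Z$-extendable if there is $z\in Z$ with $H+\mathbb{R}z$ a positive $k$-plane; $H$ is $Z$-orthogonally-extendable if there is $z\in Z\cap H^\perp$ with $H+\mathbb{R}z$ a positive $k$-plane. *)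

theory Defs
  imports "HOL-Analysis.Analysis"
begin

text \<open>A pseudo-Euclidean space is modelled as a finite-dimensional real vector space
(a type of class euclidean_space; its own inner product is not used) together with a
symmetric non-degenerate bilinear form B.\<close>

definition sym_form :: "('a::real_vector \<Rightarrow> 'a \<Rightarrow> real) \<Rightarrow> bool" where
  "sym_form B \<longleftrightarrow> (\<forall>x y. B x y = B y x)"

definition nondegenerate :: "('a::real_vector \<Rightarrow> 'a \<Rightarrow> real) \<Rightarrow> bool" where
  "nondegenerate B \<longleftrightarrow> (\<forall>x. (\<forall>y. B x y = 0) \<longrightarrow> x = 0)"

definition diag_basis :: "('a::real_vector \<Rightarrow> 'a \<Rightarrow> real) \<Rightarrow> 'a set \<Rightarrow> 'a set \<Rightarrow> bool" where
  "diag_basis B L E \<longleftrightarrow> finite E \<and> independent E \<and> span E = L \<and>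
     (\<forall>e\<in>E. \<forall>f\<in>E. e \<noteq> f \<longrightarrow> B e f = 0) \<and> (\<forall>e\<in>E. B e e \<in> {1, -1, 0})"

text \<open>Number of +1 (resp. -1) entries in a diagonalization of B restricted to L
(well defined by Sylvester's law of inertia).\<close>

definition qplus :: "('a::real_vector \<Rightarrow> 'a \<Rightarrow> real) \<Rightarrow> 'a set \<Rightarrow> nat" where
  "qplus B L = card {e \<in> (SOME E. diag_basis B L E). B e e = 1}"

definition qminus :: "('a::real_vector \<Rightarrow> 'a \<Rightarrow> real) \<Rightarrow> 'a set \<Rightarrow> nat" where
  "qminus B L = card {e \<in> (SOME E. diag_basis B L E). B e e = -1}"

definition orth_compl :: "('a::real_vector \<Rightarrow> 'a \<Rightarrow> real) \<Rightarrow> 'a set \<Rightarrow> 'a set" where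
  "orth_compl B L = {z. \<forall>h\<in>L. B z h = 0}"

definition pos_def_on :: "('a::real_vector \<Rightarrow> 'a \<Rightarrow> real) \<Rightarrow> 'a set \<Rightarrow> bool" where
  "pos_def_on B L \<longleftrightarrow> (\<forall>x\<in>L. x \<noteq> 0 \<longrightarrow> B x x > 0)"

definition pos_plane :: "('a::euclidean_space \<Rightarrow> 'a \<Rightarrow> real) \<Rightarrow> nat \<Rightarrow> 'a set \<Rightarrow> bool" where
  "pos_plane B r H \<longleftrightarrow> subspace H \<and> dim H = r \<and> pos_def_on B H"

definition line_sum :: "'a::real_vector set \<Rightarrow> 'a \<Rightarrow> 'a set" where
  "line_sum H z = {h + c *\<^sub>R z | h c. h \<in> H}"

definition extendable :: "('a::euclidean_space \<Rightarrow> 'a \<Rightarrow> real) \<Rightarrow> nat \<Rightarrow> 'a set \<Rightarrow> 'a set \<Rightarrow> bool" where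
  "extendable B k Z H \<longleftrightarrow> (\<exists>z\<in>Z. pos_plane B k (line_sum H z))"

definition orth_extendable :: "('a::euclidean_space \<Rightarrow> 'a \<Rightarrow> real) \<Rightarrow> nat \<Rightarrow> 'a set \<Rightarrow> 'a set \<Rightarrow> bool" where
  "orth_extendable B k Z H \<longleftrightarrow> (\<exists>z\<in>Z \<inter> orth_compl B H. pos_plane B k (line_sum H z))"

end

theory Submission
  imports Defs
begin

text \<open>Split Z as P + W with P positive definite of dimension q^+(Z) and W non-positive.
  If q^+(Z) = k, then P is too big for a positive (k-1)-plane H to be orthogonal to all of it,
  and a vector of P orthogonal to H extends H. If q^+(Z) < k, enlarge P to a positive
  (k-1)-plane H: any H + Rz with z in Z lies in H + W, and a positive definite subspace of
  H + W has dimension at most dim H, so H is not Z-extendable.\<close>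

lemma sym_formD: "sym_form B \<Longrightarrow> B x y = B y x"
  by (simp add: sym_form_def)

lemma bilinear_eq_0_on_span:
  assumes "bilinear B" and "\<And>v. v \<in> S \<Longrightarrow> B a v = 0" and "x \<in> span S"
  shows "B a x = 0"
  using assms by (metis bilinear_def linear_eq_0_on_span)

lemma bilinear_sum_left:
  assumes "bilinear B" and "finite A"
  shows "B (\<Sum>v\<in>A. g v) y = (\<Sum>v\<in>A. B (g v) y)"
  using assms linear_sum[of "\<lambda>x. B x y"] unfolding bilinear_def by (simp add: o_def)

lemma subspace_orth_compl: "bilinear B \<Longrightarrow> subspace (orth_compl B H)"
  unfolding orth_compl_def subspace_def
  by (auto simp: bilinear_lzero bilinear_ladd bilinear_lmul)

lemma bilinear_quadratic_sum_orthogonal: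
  assumes B: "bilinear B" and S: "sym_form B" and "finite E"
    and orth: "\<And>e f. e \<in> E \<Longrightarrow> f \<in> E \<Longrightarrow> e \<noteq> f \<Longrightarrow> B e f = 0"
  shows "B (\<Sum>v\<in>E. u v *\<^sub>R v) (\<Sum>v\<in>E. u v *\<^sub>R v) = (\<Sum>v\<in>E. (u v)\<^sup>2 * B v v)"
  using assms(3,4)
proof (induction E rule: finite_induct)
  case empty
  show ?case using bilinear_lzero[OF B] by simp
next
  case (insert a E)
  let ?s = "\<Sum>v\<in>E. u v *\<^sub>R v"
  have "?s \<in> span E" by (intro span_sum span_scale span_base)
  then have as: "B a ?s = 0"
    by (rule bilinear_eq_0_on_span[OF B, rotated]) (use insert in auto)
  then have sa: "B ?s a = 0" using sym_formD[OF S] by metis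
  have "B ?s ?s = (\<Sum>v\<in>E. (u v)\<^sup>2 * B v v)" using insert.IH insert.prems by auto
  with insert.hyps show ?case
    by (simp add: bilinear_ladd[OF B] bilinear_radd[OF B] bilinear_lmul[OF B] bilinear_rmul[OF B]
        as sa power2_eq_square algebra_simps)
qed

subsection \<open>Existence of Sylvester bases\<close>

lemma isotropic_subspace_orthogonal:
  assumes B: "bilinear B" and S: "sym_form B" and L: "subspace L"
    and iso: "\<forall>x\<in>L. B x x = 0" and "x \<in> L" "y \<in> L"
  shows "B x y = 0"
proof -
  have "x + y \<in> L" using L \<open>x \<in> L\<close> \<open>y \<in> L\<close> by (rule subspace_add)
  then have "B (x + y) (x + y) = 0" using iso by blast
  then show ?thesis using iso \<open>x \<in> L\<close> \<open>y \<in> L\<close> sym_formD[OF S, of x y]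
    by (simp add: bilinear_ladd[OF B] bilinear_radd[OF B])
qed

lemma diag_basis_insert:
  assumes B: "bilinear B" and S: "sym_form B" and L: "subspace L"
    and a: "a \<in> L" "B a a = 1 \<or> B a a = -1"
    and E: "diag_basis B (L \<inter> {y. B a y = 0}) E"
  shows "diag_basis B L (insert a E)"
proof -
  let ?L' = "L \<inter> {y. B a y = 0}"
  have fin: "finite E" and ind: "independent E" and sp: "span E = ?L'"
    and orth: "\<forall>e\<in>E. \<forall>f\<in>E. e \<noteq> f \<longrightarrow> B e f = 0" and vals: "\<forall>e\<in>E. B e e \<in> {1, -1, 0}"
    using E by (auto simp: diag_basis_def)
  have EL': "E \<subseteq> ?L'" using sp span_superset by blast
  have "a \<notin> ?L'" using a(2) by auto
  then have "independent (insert a E)" using ind sp by (simp add: independent_insert)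
  moreover have "span (insert a E) = L"
  proof
    show "span (insert a E) \<subseteq> L"
      using EL' a(1) L span_minimal[of "insert a E" L] by blast
    show "L \<subseteq> span (insert a E)"
    proof
      fix y assume y: "y \<in> L"
      have "y - (B a y / B a a) *\<^sub>R a \<in> ?L'"
        using y a L by (auto simp: bilinear_rsub[OF B] bilinear_rmul[OF B] subspace_diff subspace_scale)
      then show "y \<in> span (insert a E)" using span_breakdown_eq sp by blast
    qed
  qed
  moreover have "B e f = 0" if "e \<in> insert a E" "f \<in> insert a E" "e \<noteq> f" for e f
  proof -
    have "B a e = 0" if "e \<in> E" for e using that EL' by blast
    then show ?thesis
      using \<open>e \<in> insert a E\<close> \<open>f \<in> insert a E\<close> \<open>e \<noteq> f\<close> orth sym_formD[OF S, of _ a]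
      by (metis insert_iff)
  qed
  ultimately show ?thesis
    using fin vals a(2) unfolding diag_basis_def by auto
qed

lemma diag_basis_exists:
  fixes B :: "'a::euclidean_space \<Rightarrow> 'a \<Rightarrow> real"
  assumes B: "bilinear B" and S: "sym_form B" and L: "subspace L"
  shows "\<exists>E. diag_basis B L E"
  using L
proof (induction "dim L" arbitrary: L rule: less_induct)
  case less
  show ?case
  proof (cases "\<forall>x\<in>L. B x x = 0")
    case True
    obtain E where E: "E \<subseteq> L" "independent E" "L \<subseteq> span E" "card E = dim L"
      by (rule basis_exists)
    have "span E = L" using E less.prems span_subspace by blast
    then show ?thesis
      unfolding diag_basis_def
      using E True isotropic_subspace_orthogonal[OF B S less.prems True] independent_bound[of E]
      by (intro exI[of _ E]) auto
  next
    case False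
    then obtain x where x: "x \<in> L" "B x x \<noteq> 0" by auto
    define a where "a = (1 / sqrt \<bar>B x x\<bar>) *\<^sub>R x"
    have aL: "a \<in> L" unfolding a_def using x less.prems subspace_scale by blast
    have "B a a = B x x / \<bar>B x x\<bar>"
      using x(2) by (simp add: a_def bilinear_lmul[OF B] bilinear_rmul[OF B])
    then have aa: "B a a = 1 \<or> B a a = -1" using x(2) by (cases "B x x > 0") auto
    let ?L' = "L \<inter> {y. B a y = 0}"
    have sL': "subspace ?L'"
      using less.prems linear_subspace_kernel[of "B a"] B subspace_inter unfolding bilinear_def by blast
    have "a \<notin> ?L'" using aa by auto
    then have "?L' \<subset> L" using aL by blast
    then have "dim ?L' < dim L" using dim_psubset sL' less.prems by (metis span_eq_iff)
    then obtain E where "diag_basis B ?L' E" using less.hyps sL' by blast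
    then show ?thesis using diag_basis_insert[OF B S less.prems aL aa] by blast
  qed
qed

lemma pos_def_on_span_diag:
  assumes B: "bilinear B" and S: "sym_form B" and "finite P"
    and orth: "\<And>e f. e \<in> P \<Longrightarrow> f \<in> P \<Longrightarrow> e \<noteq> f \<Longrightarrow> B e f = 0"
    and one: "\<And>e. e \<in> P \<Longrightarrow> B e e = 1"
  shows "pos_def_on B (span P)"
  unfolding pos_def_on_def
proof (intro ballI impI)
  fix x assume "x \<in> span P" "x \<noteq> 0"
  then obtain u where u: "x = (\<Sum>v\<in>P. u v *\<^sub>R v)" using span_finite[OF \<open>finite P\<close>] by auto
  obtain v where v: "v \<in> P" "u v \<noteq> 0"
  proof (rule ccontr)
    assume "\<not> thesis"
    then have "\<forall>v\<in>P. u v = 0" using that by blast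
    then show False using u \<open>x \<noteq> 0\<close> by simp
  qed
  have "B x x = (\<Sum>v\<in>P. (u v)\<^sup>2 * B v v)"
    unfolding u by (rule bilinear_quadratic_sum_orthogonal[OF B S \<open>finite P\<close> orth])
  also have "\<dots> = (\<Sum>v\<in>P. (u v)\<^sup>2)" by (simp add: one)
  also have "\<dots> > 0" using v \<open>finite P\<close> by (intro sum_pos2) auto
  finally show "B x x > 0" .
qed

lemma nonpos_on_span_diag:
  assumes B: "bilinear B" and S: "sym_form B" and "finite W"
    and orth: "\<And>e f. e \<in> W \<Longrightarrow> f \<in> W \<Longrightarrow> e \<noteq> f \<Longrightarrow> B e f = 0"
    and nonpos: "\<And>e. e \<in> W \<Longrightarrow> B e e \<le> 0"
    and "x \<in> span W"
  shows "B x x \<le> 0"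
proof -
  obtain u where u: "x = (\<Sum>v\<in>W. u v *\<^sub>R v)" using span_finite[OF \<open>finite W\<close>] \<open>x \<in> span W\<close> by auto
  have "B x x = (\<Sum>v\<in>W. (u v)\<^sup>2 * B v v)"
    unfolding u by (rule bilinear_quadratic_sum_orthogonal[OF B S \<open>finite W\<close> orth])
  also have "\<dots> \<le> 0" by (intro sum_nonpos mult_nonneg_nonpos) (auto simp: nonpos)
  finally show ?thesis .
qed

text \<open>P is spanned by the +1 vectors of the very basis chosen in the definition of qplus.\<close>

lemma qplus_splitting:
  fixes B :: "'a::euclidean_space \<Rightarrow> 'a \<Rightarrow> real"
  assumes B: "bilinear B" and S: "sym_form B" and L: "subspace L"
  obtains P W where "subspace P" "pos_def_on B P" "dim P = qplus B L"
    "subspace W" "\<forall>w\<in>W. B w w \<le> 0" "L = {x + y |x y. x \<in> P \<and> y \<in> W}"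
proof -
  define E where "E = (SOME E. diag_basis B L E)"
  have "diag_basis B L E" unfolding E_def using diag_basis_exists[OF B S L] by (rule someI_ex)
  then have fin: "finite E" and ind: "independent E" and sp: "span E = L"
    and orth: "\<forall>e\<in>E. \<forall>f\<in>E. e \<noteq> f \<longrightarrow> B e f = 0" and vals: "\<forall>e\<in>E. B e e \<in> {1, -1, 0}"
    by (auto simp: diag_basis_def)
  define P where "P = {e \<in> E. B e e = 1}"
  have "independent P" using ind independent_mono[of E P] by (auto simp: P_def)
  then have "dim (span P) = qplus B L"
    by (simp add: dim_eq_card_independent qplus_def E_def[symmetric] P_def)
  moreover have "pos_def_on B (span P)"
    using fin orth by (intro pos_def_on_span_diag[OF B S]) (auto simp: P_def)
  moreover have "\<forall>w\<in>span (E - P). B w w \<le> 0"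
  proof
    fix w assume "w \<in> span (E - P)"
    then show "B w w \<le> 0"
      by (rule nonpos_on_span_diag[OF B S, rotated -1]) (use fin orth vals in \<open>auto simp: P_def\<close>)
  qed
  moreover have "L = {x + y |x y. x \<in> span P \<and> y \<in> span (E - P)}"
    using sp span_Un[of P "E - P"] by (simp add: Un_absorb1 P_def)
  ultimately show thesis using that subspace_span by blast
qed

text \<open>U meets W only in 0, so dim U + dim W = dim (U + W) \<le> dim (X + W) \<le> dim X + dim W.\<close>

lemma dim_pos_def_le_sum_nonpos:
  fixes B :: "'a::euclidean_space \<Rightarrow> 'a \<Rightarrow> real"
  assumes U: "subspace U" "pos_def_on B U" and W: "subspace W" "\<forall>w\<in>W. B w w \<le> 0"
    and X: "subspace X" and sub: "U \<subseteq> {x + w |x w. x \<in> X \<and> w \<in> W}"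
  shows "dim U \<le> dim X"
proof -
  have "U \<inter> W \<subseteq> {0}"
    using U(2) W(2) unfolding pos_def_on_def by (metis IntE insertCI not_le subsetI)
  then have "dim (U \<inter> W) = 0" by simp
  moreover have "{x + y |x y. x \<in> U \<and> y \<in> W} \<subseteq> {x + w |x w. x \<in> X \<and> w \<in> W}"
  proof clarify
    fix u y assume "u \<in> U" "y \<in> W"
    then obtain x w where "u = x + w" "x \<in> X" "w \<in> W" using sub by blast
    then have "u + y = x + (w + y)" "w + y \<in> W" using \<open>y \<in> W\<close> W(1) subspace_add
      by (auto simp: algebra_simps)
    then show "\<exists>x' w'. u + y = x' + w' \<and> x' \<in> X \<and> w' \<in> W" using \<open>x \<in> X\<close> by blast
  qed
  then have "dim {x + y |x y. x \<in> U \<and> y \<in> W} \<le> dim {x + w |x w. x \<in> X \<and> w \<in> W}"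
    by (rule dim_subset)
  ultimately show ?thesis using dim_sums_Int[OF U(1) W(1)] dim_sums_Int[OF X W(1)] by linarith
qed

lemma dim_pos_def_le_qplus:
  fixes B :: "'a::euclidean_space \<Rightarrow> 'a \<Rightarrow> real"
  assumes B: "bilinear B" and S: "sym_form B" and L: "subspace L"
    and U: "subspace U" "pos_def_on B U" "U \<subseteq> L"
  shows "dim U \<le> qplus B L"
proof -
  obtain P W where "subspace P" "dim P = qplus B L" "subspace W" "\<forall>w\<in>W. B w w \<le> 0"
    "L = {x + y |x y. x \<in> P \<and> y \<in> W}"
    by (rule qplus_splitting[OF B S L])
  with U show ?thesis using dim_pos_def_le_sum_nonpos[of U B W P] by simp
qed

lemma pos_def_orth_compl_sum_UNIV:
  fixes B :: "'a::euclidean_space \<Rightarrow> 'a \<Rightarrow> real"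
  assumes B: "bilinear B" and S: "sym_form B" and H: "subspace H" "pos_def_on B H"
  shows "{x + y |x y. x \<in> H \<and> y \<in> orth_compl B H} = UNIV"
proof -
  obtain E where "diag_basis B H E" using diag_basis_exists[OF B S H(1)] by blast
  then have fin: "finite E" and ind: "independent E" and sp: "span E = H"
    and orth: "\<forall>e\<in>E. \<forall>f\<in>E. e \<noteq> f \<longrightarrow> B e f = 0" and vals: "\<forall>e\<in>E. B e e \<in> {1, -1, 0}"
    by (auto simp: diag_basis_def)
  have one: "B e e = 1" if "e \<in> E" for e
  proof -
    have "e \<in> H" "e \<noteq> 0" using that sp span_base ind dependent_zero by blast+
    then have "B e e > 0" using H(2) by (auto simp: pos_def_on_def)
    then show ?thesis using vals that by auto
  qed
  have "x \<in> {x + y |x y. x \<in> H \<and> y \<in> orth_compl B H}" for x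
  proof -
    define p where "p = (\<Sum>f\<in>E. B x f *\<^sub>R f)"
    have "p \<in> H" unfolding p_def sp[symmetric] by (intro span_sum span_scale span_base)
    have "B p e = B x e" if "e \<in> E" for e
    proof -
      have "B p e = (\<Sum>f\<in>E. B x f * B f e)"
        by (simp add: p_def bilinear_sum_left[OF B fin] bilinear_lmul[OF B])
      also have "\<dots> = (\<Sum>f\<in>E. if f = e then B x e else 0)"
        using orth one \<open>e \<in> E\<close> by (intro sum.cong) auto
      finally show ?thesis using fin \<open>e \<in> E\<close> by simp
    qed
    then have "B (x - p) h = 0" if "h \<in> H" for h
      using that sp bilinear_eq_0_on_span[OF B, of E "x - p"] by (auto simp: bilinear_lsub[OF B])
    then have "x - p \<in> orth_compl B H" by (simp add: orth_compl_def)
    with \<open>p \<in> H\<close> show ?thesis by force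
  qed
  then show ?thesis by blast
qed

lemma orth_compl_meets_subspace:
  fixes B :: "'a::euclidean_space \<Rightarrow> 'a \<Rightarrow> real"
  assumes B: "bilinear B" and S: "sym_form B" and H: "subspace H" "pos_def_on B H"
    and Q: "subspace Q" and "dim H < dim Q"
  obtains z where "z \<in> Q" "z \<noteq> 0" "z \<in> orth_compl B H"
proof -
  let ?O = "orth_compl B H"
  have "dim {x + y |x y. x \<in> Q \<and> y \<in> ?O} \<le> dim {x + y |x y. x \<in> H \<and> y \<in> ?O}"
    unfolding pos_def_orth_compl_sum_UNIV[OF B S H] by (rule dim_subset) simp
  then have "dim (Q \<inter> ?O) \<noteq> 0"
    using dim_sums_Int[OF Q subspace_orth_compl[OF B, of H]]
      dim_sums_Int[OF H(1) subspace_orth_compl[OF B, of H]]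
      \<open>dim H < dim Q\<close> by linarith
  then show thesis using that by (auto simp: dim_eq_0)
qed

subsection \<open>Extending positive planes\<close>

lemma line_sum_eq_span_insert:
  assumes "subspace H"
  shows "line_sum H z = span (insert z H)"
proof -
  have "span H = H" using assms by simp
  then have "x \<in> span (insert z H) \<longleftrightarrow> (\<exists>c. x - c *\<^sub>R z \<in> H)" for x
    using span_breakdown_eq[of x z H] by (simp only:)
  moreover have "x \<in> line_sum H z \<longleftrightarrow> (\<exists>c. x - c *\<^sub>R z \<in> H)" for x
  proof
    assume "x \<in> line_sum H z"
    then obtain h c where "h \<in> H" "x = h + c *\<^sub>R z" by (auto simp: line_sum_def)
    then have "x - c *\<^sub>R z \<in> H" by simp
    then show "\<exists>c. x - c *\<^sub>R z \<in> H" ..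
  next
    assume "\<exists>c. x - c *\<^sub>R z \<in> H"
    then obtain c where "x - c *\<^sub>R z \<in> H" ..
    then show "x \<in> line_sum H z"
      unfolding line_sum_def by (intro CollectI exI[of _ "x - c *\<^sub>R z"] exI[of _ c]) auto
  qed
  ultimately show ?thesis by blast
qed

lemma subset_line_sum: "H \<subseteq> line_sum H z"
proof
  fix h assume "h \<in> H"
  then have "h = h + 0 *\<^sub>R z \<and> h \<in> H" by simp
  then show "h \<in> line_sum H z" unfolding line_sum_def by blast
qed

lemma pos_plane_line_sum:
  fixes B :: "'a::euclidean_space \<Rightarrow> 'a \<Rightarrow> real"
  assumes B: "bilinear B" and S: "sym_form B" and H: "pos_plane B r H"
    and z: "z \<in> orth_compl B H" "B z z > 0"
  shows "pos_plane B (Suc r) (line_sum H z)"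
proof -
  have Hs: "subspace H" "pos_def_on B H" "dim H = r" using H by (auto simp: pos_plane_def)
  have spH: "span H = H" using Hs(1) by simp
  have "z \<notin> H" using z by (auto simp: orth_compl_def)
  then have "z \<notin> span H" unfolding spH .
  then have dim: "dim (line_sum H z) = Suc r"
    using Hs dim_insert[of z H] by (simp add: line_sum_eq_span_insert)
  have "B x x > 0" if "x \<in> line_sum H z" "x \<noteq> 0" for x
  proof -
    obtain h c where x: "x = h + c *\<^sub>R z" "h \<in> H"
      using \<open>x \<in> line_sum H z\<close> by (auto simp: line_sum_def)
    have "B z h = 0" "B h z = 0" using z x(2) sym_formD[OF S, of z h] by (auto simp: orth_compl_def)
    then have q: "B x x = B h h + c\<^sup>2 * B z z"
      by (simp add: x bilinear_ladd[OF B] bilinear_radd[OF B] bilinear_lmul[OF B] bilinear_rmul[OF B]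
          power2_eq_square)
    show ?thesis
    proof (cases "h = 0")
      case True
      then have "c \<noteq> 0" using x \<open>x \<noteq> 0\<close> by auto
      then show ?thesis using q z(2) True by (simp add: bilinear_lzero[OF B])
    next
      case False
      then have "B h h > 0" using Hs(2) x(2) by (auto simp: pos_def_on_def)
      moreover have "c\<^sup>2 * B z z \<ge> 0" using z(2) by simp
      ultimately show ?thesis using q by linarith
    qed
  qed
  then have "pos_def_on B (line_sum H z)" by (simp add: pos_def_on_def)
  moreover have "subspace (line_sum H z)"
    unfolding line_sum_eq_span_insert[OF Hs(1)] by (rule subspace_span)
  ultimately show ?thesis using dim by (simp add: pos_plane_def)
qed

lemma pos_plane_extend:
  fixes B :: "'a::euclidean_space \<Rightarrow> 'a \<Rightarrow> real"
  assumes B: "bilinear B" and S: "sym_form B" and Q: "subspace Q" "pos_def_on B Q"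
  shows "pos_plane B r P \<Longrightarrow> r + d \<le> dim Q \<Longrightarrow> \<exists>H. P \<subseteq> H \<and> pos_plane B (r + d) H"
proof (induction d arbitrary: r P)
  case 0
  then show ?case by auto
next
  case (Suc d)
  then have P: "subspace P" "pos_def_on B P" "dim P < dim Q" by (auto simp: pos_plane_def)
  then obtain z where z: "z \<in> Q" "z \<noteq> 0" "z \<in> orth_compl B P"
    using orth_compl_meets_subspace[OF B S P(1,2) Q(1)] by blast
  have "B z z > 0" using Q(2) z by (auto simp: pos_def_on_def)
  then have "pos_plane B (Suc r) (line_sum P z)"
    using pos_plane_line_sum[OF B S Suc.prems(1) z(3)] by blast
  moreover have "Suc r + d \<le> dim Q" using Suc.prems(2) by simp
  ultimately obtain H where "line_sum P z \<subseteq> H" "pos_plane B (Suc r + d) H"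
    using Suc.IH by blast
  then show ?case using subset_line_sum[of P z] by auto
qed

lemma orth_extendable_if_qplus_eq:
  fixes B :: "'a::euclidean_space \<Rightarrow> 'a \<Rightarrow> real"
  assumes B: "bilinear B" and S: "sym_form B" and Z: "subspace Z"
    and "qplus B Z = k" and "k \<ge> 1" and H: "pos_plane B (k - 1) H"
  shows "orth_extendable B k Z H"
proof -
  obtain P W where P: "subspace P" "pos_def_on B P" "dim P = qplus B Z"
    and W: "subspace W" and Z_eq: "Z = {x + y |x y. x \<in> P \<and> y \<in> W}"
    by (rule qplus_splitting[OF B S Z])
  have "P \<subseteq> Z"
  proof
    fix p assume "p \<in> P"
    then have "p + 0 \<in> {x + y |x y. x \<in> P \<and> y \<in> W}" using subspace_0[OF W] by blast
    then show "p \<in> Z" using Z_eq by simp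
  qed
  have Hs: "subspace H" "pos_def_on B H" "dim H < dim P"
    using H P(3) \<open>qplus B Z = k\<close> \<open>k \<ge> 1\<close> by (auto simp: pos_plane_def)
  then obtain z where z: "z \<in> P" "z \<noteq> 0" "z \<in> orth_compl B H"
    by (rule orth_compl_meets_subspace[OF B S _ _ P(1)])
  have "B z z > 0" using P(2) z by (auto simp: pos_def_on_def)
  then have "pos_plane B (Suc (k - 1)) (line_sum H z)"
    by (rule pos_plane_line_sum[OF B S H z(3)])
  then have "pos_plane B k (line_sum H z)" using \<open>k \<ge> 1\<close> by simp
  then show ?thesis unfolding orth_extendable_def using z \<open>P \<subseteq> Z\<close> by blast
qed

lemma qplus_eq_if_extendable:
  fixes B :: "'a::euclidean_space \<Rightarrow> 'a \<Rightarrow> real"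
  assumes B: "bilinear B" and S: "sym_form B" and Z: "subspace Z" and k: "qplus B UNIV = k"
    and ext: "\<forall>H. pos_plane B (k - 1) H \<longrightarrow> extendable B k Z H"
  shows "qplus B Z = k"
proof (rule ccontr)
  assume ne: "qplus B Z \<noteq> k"
  obtain P W where P: "subspace P" "pos_def_on B P" "dim P = qplus B Z"
    and W: "subspace W" "\<forall>w\<in>W. B w w \<le> 0" and Z_eq: "Z = {x + y |x y. x \<in> P \<and> y \<in> W}"
    by (rule qplus_splitting[OF B S Z])
  obtain V where V: "subspace V" "pos_def_on B V" "dim V = qplus B UNIV"
    by (rule qplus_splitting[OF B S subspace_UNIV])
  have "dim P \<le> k" using dim_pos_def_le_qplus[OF B S subspace_UNIV P(1,2)] k by simp
  with ne P(3) have dimP: "dim P + (k - 1 - dim P) = k - 1" by simp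
  have "pos_plane B (dim P) P" using P(1,2) by (simp add: pos_plane_def)
  moreover have "dim P + (k - 1 - dim P) \<le> dim V" using dimP V(3) k by simp
  ultimately obtain H where H: "P \<subseteq> H" "pos_plane B (k - 1) H"
    using pos_plane_extend[OF B S V(1,2)] dimP by metis
  then obtain z where "z \<in> Z" and L: "pos_plane B k (line_sum H z)"
    using ext unfolding extendable_def by blast
  then obtain p w where pw: "z = p + w" "p \<in> H" "w \<in> W" using Z_eq H(1) by blast
  have H_sub: "subspace H" using H(2) by (simp add: pos_plane_def)
  have "line_sum H z \<subseteq> {x + w |x w. x \<in> H \<and> w \<in> W}"
  proof
    fix y assume "y \<in> line_sum H z"
    then obtain h c where y: "y = h + c *\<^sub>R z" "h \<in> H" by (auto simp: line_sum_def)
    have "y = (h + c *\<^sub>R p) + c *\<^sub>R w" using y(1) pw(1) by (simp add: algebra_simps)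
    moreover have "h + c *\<^sub>R p \<in> H" using y(2) pw(2) H_sub by (simp add: subspace_add subspace_scale)
    moreover have "c *\<^sub>R w \<in> W" using pw(3) W(1) by (simp add: subspace_scale)
    ultimately show "y \<in> {x + w |x w. x \<in> H \<and> w \<in> W}" by blast
  qed
  moreover have "subspace (line_sum H z)" "pos_def_on B (line_sum H z)"
    using L by (auto simp: pos_plane_def)
  ultimately have "dim (line_sum H z) \<le> dim H"
    using dim_pos_def_le_sum_nonpos[of "line_sum H z" B W H] W H_sub by blast
  then show False using L H(2) ne P(3) \<open>dim P \<le> k\<close> by (simp add: pos_plane_def)
qed

text \<open>Non-degeneracy and the negative index l play no role; k \<ge> 1 would suffice.\<close>

theorem proposition3:
  fixes B :: "'a::euclidean_space \<Rightarrow> 'a \<Rightarrow> real" and k l :: nat and Z :: "'a set"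
  assumes "bilinear B" and "sym_form B" and "nondegenerate B"
    and "qplus B UNIV = k" and "qminus B UNIV = l"
    and "k \<ge> 2" and "l \<ge> 2"
    and "subspace Z"
  shows "(qplus B Z = k \<longleftrightarrow> (\<forall>H. pos_plane B (k - 1) H \<longrightarrow> extendable B k Z H))
       \<and> ((\<forall>H. pos_plane B (k - 1) H \<longrightarrow> extendable B k Z H) \<longleftrightarrow>
          (\<forall>H. pos_plane B (k - 1) H \<longrightarrow> orth_extendable B k Z H))"
proof -
  have i_iii: "\<forall>H. pos_plane B (k - 1) H \<longrightarrow> orth_extendable B k Z H" if "qplus B Z = k"
    using orth_extendable_if_qplus_eq[OF assms(1,2,8) that] \<open>k \<ge> 2\<close> by simp
  have iii_ii: "\<forall>H. pos_plane B (k - 1) H \<longrightarrow> extendable B k Z H"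
    if "\<forall>H. pos_plane B (k - 1) H \<longrightarrow> orth_extendable B k Z H"
    using that unfolding extendable_def orth_extendable_def by blast
  have ii_i: "qplus B Z = k" if "\<forall>H. pos_plane B (k - 1) H \<longrightarrow> extendable B k Z H"
    using qplus_eq_if_extendable[OF assms(1,2,8,4) that] .
  show ?thesis using i_iii iii_ii ii_i by blast
qed

end
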